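(* Let $h,m$ be positive integers. Every $\mathrm{CC}^h[m]$-circuit $\Gamma$ computing a non-constant Boolean function has balance at least $2^{1-\gamma_{h,m}^{-1}(|\Gamma|)}$.
   Context: For an integer $m\ge 1$ and $A\subseteq\{0,\dots,m-1\}$, a gate $\mathrm{MOD}_m^A$ takes finitely many Boolean inputs (counted with multiplicity) and outputs $1$ if their sum modulo $m$ lies in $A$, and $0$ otherwise. A $\mathrm{CC}^h[m]$-circuit is a depth-$h$ Boolean circuit all of whose gates are of the form $\mathrm{MOD}_m^A$ ($A$ may vary between gates), with Boolean variable inputs (constants allowed) and multiple wires allowed. $|\Gamma|$ is the number of gates of $\Gamma$. $\gamma_{h,m}(n)$ is the size of the smallest $\mathrm{CC}^h[m]$-circuit computing the $n$-ary conjunction $\mathrm{AND}_n$ (partial function), and $\gamma_{h,m}^{-1}(k)$ is the largest $n$ with $\gamma_{h,m}(n)\le k$. The balance of an $n$-ary Boolean function $f$ is $1-\frac{\big||f^{-1}(0)|-|f^{-1}(1)|\big|}{2^n}$. *)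

theory Defs
  imports Complex_Main "HOL-Library.Multiset"
begin

text \<open>A wire entering a gate: an input variable (by index), a Boolean constant,
  or the output of an earlier gate (by index in the gate list).\<close>
datatype wire = Var nat | Const bool | Gate nat

text \<open>A MOD_m^A gate: the accepting set A and the multiset of its input wires
  (multiple wires allowed).\<close>
type_synonym gate = "nat set \<times> wire multiset"

text \<open>A circuit is a nonempty list of gates in topological order; its output is the last gate.
  The size is the number of gates.\<close>
type_synonym circuit = "gate list"

definition wire_val :: "bool list \<Rightarrow> bool list \<Rightarrow> wire \<Rightarrow> bool" where
  "wire_val x vs w = (case w of Var k \<Rightarrow> x ! k | Const b \<Rightarrow> b | Gate j \<Rightarrow> vs ! j)"

definition gate_val :: "nat \<Rightarrow> bool list \<Rightarrow> bool list \<Rightarrow> gate \<Rightarrow> bool" where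
  "gate_val m x vs g = ((\<Sum>w\<in>#snd g. (if wire_val x vs w then 1 else 0::nat)) mod m \<in> fst g)"

definition gate_vals :: "nat \<Rightarrow> bool list \<Rightarrow> gate list \<Rightarrow> bool list" where
  "gate_vals m x gs = foldl (\<lambda>vs g. vs @ [gate_val m x vs g]) [] gs"

definition circuit_eval :: "nat \<Rightarrow> circuit \<Rightarrow> bool list \<Rightarrow> bool" where
  "circuit_eval m \<Gamma> x = last (gate_vals m x \<Gamma>)"

definition wire_depth :: "nat list \<Rightarrow> wire \<Rightarrow> nat" where
  "wire_depth ds w = (case w of Gate j \<Rightarrow> ds ! j | _ \<Rightarrow> 0)"

definition gate_depths :: "gate list \<Rightarrow> nat list" where
  "gate_depths gs = foldl (\<lambda>ds g. ds @ [1 + Max (insert 0 (wire_depth ds ` set_mset (snd g)))]) [] gs"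

definition circuit_depth :: "circuit \<Rightarrow> nat" where
  "circuit_depth \<Gamma> = Max (insert 0 (set (gate_depths \<Gamma>)))"

definition wf_circuit :: "nat \<Rightarrow> nat \<Rightarrow> circuit \<Rightarrow> bool" where
  "wf_circuit m n \<Gamma> \<longleftrightarrow> \<Gamma> \<noteq> [] \<and>
     (\<forall>i < length \<Gamma>. fst (\<Gamma> ! i) \<subseteq> {0..<m} \<and>
        (\<forall>w\<in>#snd (\<Gamma> ! i). (\<forall>k. w = Var k \<longrightarrow> k < n) \<and> (\<forall>j. w = Gate j \<longrightarrow> j < i)))"

definition CC_circuit :: "nat \<Rightarrow> nat \<Rightarrow> nat \<Rightarrow> circuit \<Rightarrow> bool" where
  "CC_circuit h m n \<Gamma> \<longleftrightarrow> wf_circuit m n \<Gamma> \<and> circuit_depth \<Gamma> \<le> h"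

definition computes :: "nat \<Rightarrow> nat \<Rightarrow> circuit \<Rightarrow> (bool list \<Rightarrow> bool) \<Rightarrow> bool" where
  "computes m n \<Gamma> f \<longleftrightarrow> (\<forall>x. length x = n \<longrightarrow> circuit_eval m \<Gamma> x = f x)"

definition AND_fun :: "bool list \<Rightarrow> bool" where
  "AND_fun x = (\<forall>b\<in>set x. b)"

definition AND_computable :: "nat \<Rightarrow> nat \<Rightarrow> nat \<Rightarrow> bool" where
  "AND_computable h m n \<longleftrightarrow> (\<exists>\<Gamma>. CC_circuit h m n \<Gamma> \<and> computes m n \<Gamma> AND_fun)"

text \<open>gamma h m n (meaningful only when AND_computable h m n): smallest size.\<close>
definition gamma :: "nat \<Rightarrow> nat \<Rightarrow> nat \<Rightarrow> nat" where
  "gamma h m n = (LEAST k. \<exists>\<Gamma>. CC_circuit h m n \<Gamma> \<and> computes m n \<Gamma> AND_fun \<and> length \<Gamma> = k)"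

definition gamma_inv :: "nat \<Rightarrow> nat \<Rightarrow> nat \<Rightarrow> nat" where
  "gamma_inv h m k = (GREATEST n. AND_computable h m n \<and> gamma h m n \<le> k)"

definition nonconstant :: "nat \<Rightarrow> (bool list \<Rightarrow> bool) \<Rightarrow> bool" where
  "nonconstant n f \<longleftrightarrow> (\<exists>x y. length x = n \<and> length y = n \<and> f x \<noteq> f y)"

definition balance :: "nat \<Rightarrow> (bool list \<Rightarrow> bool) \<Rightarrow> real" where
  "balance n f = 1 - \<bar>real (card {x. length x = n \<and> \<not> f x}) - real (card {x. length x = n \<and> f x})\<bar> / 2 ^ n"

end

theory Submission
  imports Defs "HOL-Number_Theory.Cong"
begin

text \<open>
  Let \<open>N = gamma_inv h m |\<Gamma>|\<close> and suppose the function computed by \<open>\<Gamma>\<close> takes some value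
  \<open>b\<close> on fewer than \<open>2^(n-N)\<close> inputs. Such a sparse level set restricts to \<open>AND_(N+1)\<close>:
  going through the variables, one on which half of the level set is empty is replaced by a
  fresh variable or its negation, and any other one is fixed to the constant selecting the
  smaller half, which keeps the level set sparse relative to the number of variables still to
  be produced. Substituting these literals into \<open>\<Gamma>\<close>, and complementing the accepting set of
  the output gate if \<open>b\<close> is false, gives a \<open>CC^h[m]\<close>-circuit of the same size computing
  \<open>AND_(N+1)\<close>, contradicting the maximality of \<open>N\<close>. Hence both level sets have at least
  \<open>2^(n-N)\<close> elements, which is the bound on the balance.

  The maximum defining \<open>gamma_inv\<close> exists because an \<open>AND_n\<close>-circuit with \<open>s\<close> gates has
  \<open>n < m^s\<close>: two of the \<open>n + 1\<close> inputs \<open>0^t 1^(n-t)\<close> give the same residues mod \<open>m\<close> of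
  the number of true input wires at every gate, and then the input that is \<open>0\<close> exactly
  between the two thresholds is indistinguishable from \<open>1^n\<close>.
\<close>

section \<open>Restricting sparse Boolean functions to AND\<close>

lemma finite_bool_lists: "finite {xs :: bool list. length xs = n}"
  using finite_lists_length_eq[of "UNIV :: bool set" n] by simp

lemma card_bool_lists: "card {xs :: bool list. length xs = n} = 2 ^ n"
  using card_lists_length_eq[of "UNIV :: bool set" n] by simp

lemma finite_bool_lists_filter: "finite {xs :: bool list. length xs = n \<and> P xs}"
  by (rule finite_subset[OF _ finite_bool_lists[of n]]) auto

lemma card_bool_lists_Suc:
  "card {x. length x = Suc n \<and> P x} =
     card {xs. length xs = n \<and> P (False # xs)} + card {xs. length xs = n \<and> P (True # xs)}"
proof -
  let ?S = "\<lambda>b. {xs. length xs = n \<and> P (b # xs)}"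
  have "{x. length x = Suc n \<and> P x} = Cons False ` ?S False \<union> Cons True ` ?S True"
  proof (intro equalityI subsetI)
    fix x assume "x \<in> {x. length x = Suc n \<and> P x}"
    then obtain b xs where "x = b # xs" "xs \<in> ?S b"
      by (cases x) auto
    then show "x \<in> Cons False ` ?S False \<union> Cons True ` ?S True"
      by (cases b) auto
  qed auto
  moreover have "Cons False ` ?S False \<inter> Cons True ` ?S True = {}"
    by auto
  ultimately show ?thesis
    by (simp add: card_Un_disjoint finite_bool_lists_filter card_image)
qed

lemma AND_fun_Cons [simp]: "AND_fun (a # y) = (a \<and> AND_fun y)"
  by (simp add: AND_fun_def)

datatype lit = LConst bool | LVar nat bool

fun lit_val :: "bool list \<Rightarrow> lit \<Rightarrow> bool" where
  "lit_val y (LConst b) = b"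
| "lit_val y (LVar j b) = (y ! j = b)"

fun lit_vars :: "lit \<Rightarrow> nat set" where
  "lit_vars (LConst b) = {}"
| "lit_vars (LVar j b) = {j}"

fun lit_shift :: "lit \<Rightarrow> lit" where
  "lit_shift (LConst b) = LConst b"
| "lit_shift (LVar j b) = LVar (Suc j) b"

lemma lit_val_shift [simp]: "lit_val (a # y) (lit_shift l) = lit_val y l"
  by (cases l) auto

lemma lit_vars_shift [simp]: "lit_vars (lit_shift l) = Suc ` lit_vars l"
  by (cases l) auto

definition restricts_to_AND :: "(bool list \<Rightarrow> bool) \<Rightarrow> nat \<Rightarrow> lit list \<Rightarrow> bool" where
  "restricts_to_AND f k ls \<longleftrightarrow> (\<forall>l\<in>set ls. lit_vars l \<subseteq> {..<k}) \<and>
     (\<forall>y. length y = k \<longrightarrow> f (map (lit_val y) ls) = AND_fun y)"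

lemma restricts_to_AND_Cons_const:
  "restricts_to_AND (\<lambda>xs. f (b # xs)) k ls \<Longrightarrow> restricts_to_AND f k (LConst b # ls)"
  by (simp add: restricts_to_AND_def)

lemma restricts_to_AND_Cons_var:
  assumes restr: "restricts_to_AND (\<lambda>xs. f (b # xs)) k ls"
    and dead: "\<And>xs. length xs = length ls \<Longrightarrow> \<not> f ((\<not> b) # xs)"
  shows "restricts_to_AND f (Suc k) (LVar 0 b # map lit_shift ls)"
  unfolding restricts_to_AND_def
proof (intro conjI ballI allI impI)
  fix y :: "bool list"
  assume "length y = Suc k"
  then obtain a y' where y: "y = a # y'" "length y' = k"
    by (cases y) auto
  have "f (b # map (lit_val y') ls) = AND_fun y'"
    using restr y(2) by (simp add: restricts_to_AND_def)
  moreover have "\<not> f ((\<not> b) # map (lit_val y') ls)"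
    using dead by simp
  ultimately have "f ((a = b) # map (lit_val y') ls) = (a \<and> AND_fun y')"
    by (cases a) simp_all
  then show "f (map (lit_val y) (LVar 0 b # map lit_shift ls)) = AND_fun y"
    by (simp add: y comp_def)
next
  fix l
  assume "l \<in> set (LVar 0 b # map lit_shift ls)"
  then consider (head) "l = LVar 0 b" | (tail) l' where "l' \<in> set ls" "l = lit_shift l'"
    by auto
  then show "lit_vars l \<subseteq> {..<Suc k}"
  proof cases
    case tail
    then have "lit_vars l' \<subseteq> {..<k}"
      using restr by (simp add: restricts_to_AND_def)
    with tail show ?thesis
      by auto
  qed simp
qed

lemma restricts_to_AND_0: "f x \<Longrightarrow> restricts_to_AND f 0 (map LConst x)"
  by (simp add: restricts_to_AND_def AND_fun_def comp_def map_idI)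

lemma sparse_Cons_cases:
  fixes f :: "bool list \<Rightarrow> bool"
  assumes nonempty: "{x. length x = Suc n \<and> f x} \<noteq> {}"
    and sparse: "card {x. length x = Suc n \<and> f x} * 2 ^ Suc k < 2 ^ Suc (Suc n)"
  obtains (dead) b where "\<And>xs. length xs = n \<Longrightarrow> \<not> f ((\<not> b) # xs)"
      and "{xs. length xs = n \<and> f (b # xs)} \<noteq> {}"
      and "card {xs. length xs = n \<and> f (b # xs)} * 2 ^ k < 2 ^ Suc n"
  | (both) b where "{xs. length xs = n \<and> f (b # xs)} \<noteq> {}"
      and "card {xs. length xs = n \<and> f (b # xs)} * 2 ^ Suc k < 2 ^ Suc n"
proof -
  define c where "c b = card {xs. length xs = n \<and> f (b # xs)}" for b
  have card_f: "card {x. length x = Suc n \<and> f x} = c False + c True"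
    unfolding c_def by (rule card_bool_lists_Suc)
  have c_zero_iff: "c b = 0 \<longleftrightarrow> (\<forall>xs. length xs = n \<longrightarrow> \<not> f (b # xs))" for b
    by (auto simp: c_def finite_bool_lists_filter)
  have c_nonempty: "{xs. length xs = n \<and> f (b # xs)} \<noteq> {}" if "c b \<noteq> 0" for b
    using that unfolding c_def by (metis card.empty)
  have "c False + c True \<noteq> 0"
    using nonempty finite_bool_lists_filter[of "Suc n" f] unfolding card_f[symmetric] by simp
  consider (one_empty) b where "c (\<not> b) = 0" | (none_empty) "c False \<noteq> 0" "c True \<noteq> 0"
    by (metis (full_types) not_False_eq_True not_True_eq_False)
  then show ?thesis
  proof cases
    case (one_empty b)
    with card_f \<open>c False + c True \<noteq> 0\<close> have "c b \<noteq> 0" and "card {x. length x = Suc n \<and> f x} = c b"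
      by (cases b; simp)+
    show ?thesis
    proof (rule dead[of b])
      show "\<not> f ((\<not> b) # xs)" if "length xs = n" for xs
        using one_empty that unfolding c_zero_iff by simp
      show "{xs. length xs = n \<and> f (b # xs)} \<noteq> {}"
        using c_nonempty \<open>c b \<noteq> 0\<close> .
      show "card {xs. length xs = n \<and> f (b # xs)} * 2 ^ k < 2 ^ Suc n"
        using sparse \<open>card {x. length x = Suc n \<and> f x} = c b\<close> by (simp add: c_def ac_simps)
    qed
  next
    case none_empty
    obtain b where "2 * c b \<le> c False + c True"
      using that[of False] that[of True] by linarith
    then have "2 * (c b * 2 ^ Suc k) \<le> (c False + c True) * 2 ^ Suc k"
      by simp
    also have "\<dots> < 2 * 2 ^ Suc n"
      using sparse card_f by simp
    finally have "c b * 2 ^ Suc k < 2 ^ Suc n"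
      by simp
    moreover have "c b \<noteq> 0"
      using none_empty by (cases b) simp_all
    ultimately show ?thesis
      using c_nonempty by (intro both[of b]) (simp_all add: c_def)
  qed
qed

lemma restricts_to_AND_of_sparse:
  fixes f :: "bool list \<Rightarrow> bool"
  assumes "{x. length x = n \<and> f x} \<noteq> {}"
    and "card {x. length x = n \<and> f x} * 2 ^ k < 2 ^ Suc n"
  shows "\<exists>ls. length ls = n \<and> restricts_to_AND f k ls"
  using assms
proof (induction n arbitrary: f k)
  case 0
  then have "{x. length x = 0 \<and> f x} = {[]}"
    by auto
  with "0.prems"(2) have "2 ^ k < (2::nat)"
    by simp
  then have "k = 0"
    by (cases k) simp_all
  with \<open>{x. length x = 0 \<and> f x} = {[]}\<close> show ?case
    using restricts_to_AND_0[of f "[]"] by auto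
next
  case (Suc n)
  show ?case
  proof (cases "k = 0")
    case True
    from Suc.prems(1) obtain x where "length x = Suc n" "f x"
      by auto
    with True show ?thesis
      using restricts_to_AND_0[of f x] by (intro exI[of _ "map LConst x"]) simp
  next
    case False
    then obtain k' where k: "k = Suc k'"
      by (cases k) auto
    from Suc.prems[unfolded k] show ?thesis
    proof (cases rule: sparse_Cons_cases)
      case (dead b)
      from Suc.IH[OF dead(2,3)] obtain ls
        where "length ls = n" "restricts_to_AND (\<lambda>xs. f (b # xs)) k' ls"
        by blast
      with dead have "restricts_to_AND f k (LVar 0 b # map lit_shift ls)"
        unfolding k by (intro restricts_to_AND_Cons_var) auto
      with \<open>length ls = n\<close> show ?thesis
        by (intro exI) auto
    next
      case (both b)
      from Suc.IH[OF both] obtain ls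
        where "length ls = n" "restricts_to_AND (\<lambda>xs. f (b # xs)) k ls"
        unfolding k by blast
      then show ?thesis
        by (intro exI[of _ "LConst b # ls"]) (simp add: restricts_to_AND_Cons_const)
    qed
  qed
qed

section \<open>Evaluation and shape of circuits\<close>

definition wire_sum :: "bool list \<Rightarrow> bool list \<Rightarrow> wire multiset \<Rightarrow> nat" where
  "wire_sum x vs M = (\<Sum>w\<in>#M. if wire_val x vs w then 1 else 0)"

lemma wire_sum_empty [simp]: "wire_sum x vs {#} = 0"
  and wire_sum_add_mset [simp]:
    "wire_sum x vs (add_mset w M) = (if wire_val x vs w then 1 else 0) + wire_sum x vs M"
  and wire_sum_union [simp]: "wire_sum x vs (M + N) = wire_sum x vs M + wire_sum x vs N"
  by (simp_all add: wire_sum_def)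

lemma gate_val_wire_sum: "gate_val m x vs g = (wire_sum x vs (snd g) mod m \<in> fst g)"
  by (simp add: gate_val_def wire_sum_def)

lemma gate_vals_snoc: "gate_vals m x (gs @ [g]) = gate_vals m x gs @ [gate_val m x (gate_vals m x gs) g]"
  by (simp add: gate_vals_def)

lemma circuit_eval_snoc: "circuit_eval m (gs @ [g]) x = gate_val m x (gate_vals m x gs) g"
  by (simp add: circuit_eval_def gate_vals_snoc)

lemma gate_depths_snoc:
  "gate_depths (gs @ [g]) = gate_depths gs @ [1 + Max (insert 0 (wire_depth (gate_depths gs) ` set_mset (snd g)))]"
  by (simp add: gate_depths_def)

lemma gate_depths_cong:
  assumes "map snd gs = map snd gs'"
  shows "gate_depths gs = gate_depths gs'"
proof -
  have "gate_depths gs =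
      foldl (\<lambda>ds M. ds @ [1 + Max (insert 0 (wire_depth ds ` set_mset M))]) [] (map snd gs)" for gs
    by (simp add: gate_depths_def foldl_map)
  then show ?thesis by (simp only: assms)
qed

lemma wf_circuit_accepting_subset:
  assumes "wf_circuit m n \<Gamma>" and "g \<in> set \<Gamma>"
  shows "fst g \<subseteq> {0..<m}"
proof -
  obtain j where "j < length \<Gamma>" "g = \<Gamma> ! j"
    using assms(2) by (auto simp: in_set_conv_nth)
  then show ?thesis
    using assms(1) unfolding wf_circuit_def by blast
qed

lemma wf_circuit_Var_less:
  assumes "wf_circuit m n \<Gamma>" and "g \<in> set \<Gamma>" and "Var i \<in># snd g"
  shows "i < n"
proof -
  obtain j where "j < length \<Gamma>" "g = \<Gamma> ! j"
    using assms(2) by (auto simp: in_set_conv_nth)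
  then show ?thesis
    using assms(1,3) unfolding wf_circuit_def by blast
qed

section \<open>Substituting literals into a circuit\<close>

text \<open>A negative literal is wired as \<open>1 + (m - 1) y\<^sub>j \<equiv> 1 - y\<^sub>j (mod m)\<close>.\<close>

definition subst_wire :: "nat \<Rightarrow> lit list \<Rightarrow> wire \<Rightarrow> wire multiset" where
  "subst_wire m ls w = (case w of
      Var i \<Rightarrow> (case ls ! i of
          LConst b \<Rightarrow> {#Const b#}
        | LVar j b \<Rightarrow> if b then {#Var j#} else add_mset (Const True) (replicate_mset (m - 1) (Var j)))
    | _ \<Rightarrow> {#w#})"

definition subst_gate :: "nat \<Rightarrow> lit list \<Rightarrow> gate \<Rightarrow> gate" where
  "subst_gate m ls g = (fst g, \<Sum>w\<in>#snd g. subst_wire m ls w)"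

lemma wire_sum_replicate_mset [simp]:
  "wire_sum x vs (replicate_mset k w) = k * (if wire_val x vs w then 1 else 0)"
  by (simp add: wire_sum_def)

lemma wire_sum_subst_wire:
  assumes "m > 0" and "\<And>i. w = Var i \<Longrightarrow> i < length ls"
  shows "wire_sum y vs (subst_wire m ls w) mod m = wire_sum (map (lit_val y) ls) vs {#w#} mod m"
proof (cases w)
  case (Var i)
  with assms(2) have "i < length ls" by simp
  show ?thesis
  proof (cases "ls ! i")
    case (LVar j b)
    have "(1 + (m - 1) * (if y ! j then 1 else 0)) mod m = (if y ! j then 0 else 1) mod m"
      using assms(1) by (cases "y ! j") simp_all
    with LVar Var \<open>i < length ls\<close> show ?thesis
      by (cases b) (simp_all add: subst_wire_def wire_val_def)
  qed (use Var \<open>i < length ls\<close> in \<open>simp add: subst_wire_def wire_val_def\<close>)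
qed (simp_all add: subst_wire_def wire_val_def)

lemma gate_val_subst_gate:
  assumes "m > 0" and "\<And>i. Var i \<in># snd g \<Longrightarrow> i < length ls"
  shows "gate_val m y vs (subst_gate m ls g) = gate_val m (map (lit_val y) ls) vs g"
proof -
  have "wire_sum y vs (\<Sum>w\<in>#M. subst_wire m ls w) mod m = wire_sum (map (lit_val y) ls) vs M mod m"
    if "\<And>i. Var i \<in># M \<Longrightarrow> i < length ls" for M
    using that
  proof (induction M)
    case (add w M)
    have "wire_sum y vs (subst_wire m ls w) mod m = wire_sum (map (lit_val y) ls) vs {#w#} mod m"
      using add.prems by (intro wire_sum_subst_wire[OF assms(1)]) simp
    from mod_add_cong[OF this add.IH] add.prems show ?case
      by simp
  qed simp
  from this[OF assms(2)] show ?thesis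
    by (simp add: gate_val_wire_sum subst_gate_def)
qed

lemma gate_vals_subst_gate:
  assumes "m > 0" and "\<And>g i. g \<in> set gs \<Longrightarrow> Var i \<in># snd g \<Longrightarrow> i < length ls"
  shows "gate_vals m y (map (subst_gate m ls) gs) = gate_vals m (map (lit_val y) ls) gs"
  using assms(2)
proof (induction gs rule: rev_induct)
  case (snoc g gs)
  have "gate_val m y vs (subst_gate m ls g) = gate_val m (map (lit_val y) ls) vs g" for vs
    using snoc.prems[of g] by (intro gate_val_subst_gate[OF assms(1)]) simp
  moreover have "gate_vals m y (map (subst_gate m ls) gs) = gate_vals m (map (lit_val y) ls) gs"
    by (rule snoc.IH, rule snoc.prems) auto
  ultimately show ?case
    by (simp add: gate_vals_snoc)
qed (simp add: gate_vals_def)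

lemma circuit_eval_subst_gate:
  assumes "m > 0" and "wf_circuit m (length ls) \<Gamma>"
  shows "circuit_eval m (map (subst_gate m ls) \<Gamma>) y = circuit_eval m \<Gamma> (map (lit_val y) ls)"
  using gate_vals_subst_gate[OF assms(1) wf_circuit_Var_less[OF assms(2)]]
  by (simp add: circuit_eval_def)

lemma mem_subst_wire:
  assumes "u \<in># subst_wire m ls w" and "\<And>i. w = Var i \<Longrightarrow> i < length ls"
    and "\<forall>l\<in>set ls. lit_vars l \<subseteq> {..<k}"
  shows "(\<forall>j. u = Var j \<longrightarrow> j < k) \<and> (\<forall>j. u = Gate j \<longrightarrow> w = Gate j)"
proof (cases w)
  case (Var i)
  with assms(2,3) have "lit_vars (ls ! i) \<subseteq> {..<k}"
    by simp
  with assms(1) Var show ?thesis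
    by (cases "ls ! i") (auto simp: subst_wire_def split: if_splits)
qed (use assms(1) in \<open>simp_all add: subst_wire_def\<close>)

lemma wire_depths_subst_wire:
  "insert 0 (wire_depth ds ` set_mset (subst_wire m ls w)) = {0, wire_depth ds w}"
  by (cases w) (auto simp: subst_wire_def wire_depth_def split: lit.splits)

lemma gate_depths_subst_gate: "gate_depths (map (subst_gate m ls) gs) = gate_depths gs"
proof (induction gs rule: rev_induct)
  case (snoc g gs)
  have "insert 0 (wire_depth ds ` set_mset (snd (subst_gate m ls g))) =
      insert 0 (\<Union>w\<in>set_mset (snd g). insert 0 (wire_depth ds ` set_mset (subst_wire m ls w)))" for ds
    by (auto simp: subst_gate_def)
  also have "\<dots> ds = insert 0 (wire_depth ds ` set_mset (snd g))" for ds
    by (auto simp: wire_depths_subst_wire)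
  finally show ?case
    by (simp only: map_append list.map gate_depths_snoc snoc.IH)
qed (simp add: gate_depths_def)

lemma wf_circuit_subst_gate:
  assumes wf: "wf_circuit m (length ls) \<Gamma>" and lits: "\<forall>l\<in>set ls. lit_vars l \<subseteq> {..<k}"
  shows "wf_circuit m k (map (subst_gate m ls) \<Gamma>)"
proof -
  have "(\<forall>j. u = Var j \<longrightarrow> j < k) \<and> (\<forall>j. u = Gate j \<longrightarrow> j < i)"
    if i: "i < length \<Gamma>" and u: "u \<in># snd (subst_gate m ls (\<Gamma> ! i))" for i u
  proof -
    obtain w where w: "w \<in># snd (\<Gamma> ! i)" "u \<in># subst_wire m ls w"
      using u by (auto simp: subst_gate_def)
    with wf i have "\<forall>j. w = Var j \<longrightarrow> j < length ls" and "\<forall>j. w = Gate j \<longrightarrow> j < i"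
      by (simp_all add: wf_circuit_def)
    with mem_subst_wire[OF w(2) _ lits] show ?thesis
      by simp
  qed
  with wf show ?thesis
    by (simp add: wf_circuit_def subst_gate_def)
qed

lemma CC_circuit_subst_gate:
  assumes "CC_circuit h m (length ls) \<Gamma>" and "\<forall>l\<in>set ls. lit_vars l \<subseteq> {..<k}"
  shows "CC_circuit h m k (map (subst_gate m ls) \<Gamma>)"
  using assms wf_circuit_subst_gate
  by (simp add: CC_circuit_def circuit_depth_def gate_depths_subst_gate)

definition negate_output :: "nat \<Rightarrow> circuit \<Rightarrow> circuit" where
  "negate_output m \<Gamma> = butlast \<Gamma> @ [({0..<m} - fst (last \<Gamma>), snd (last \<Gamma>))]"

lemma negate_output_snoc [simp]: "negate_output m (gs @ [g]) = gs @ [({0..<m} - fst g, snd g)]"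
  by (simp add: negate_output_def)

lemma length_negate_output: "\<Gamma> \<noteq> [] \<Longrightarrow> length (negate_output m \<Gamma>) = length \<Gamma>"
  by (simp add: negate_output_def)

lemma circuit_eval_negate_output:
  assumes "m > 0" and "\<Gamma> \<noteq> []"
  shows "circuit_eval m (negate_output m \<Gamma>) x = (\<not> circuit_eval m \<Gamma> x)"
proof -
  obtain gs g where "\<Gamma> = gs @ [g]"
    using assms(2) by (cases \<Gamma> rule: rev_cases) auto
  then show ?thesis
    using assms(1) by (simp add: circuit_eval_snoc gate_val_wire_sum)
qed

lemma wf_circuit_cong_snd:
  assumes "wf_circuit m n \<Gamma>" and snd_eq: "map snd \<Gamma>' = map snd \<Gamma>"
    and "\<forall>g\<in>set \<Gamma>'. fst g \<subseteq> {0..<m}"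
  shows "wf_circuit m n \<Gamma>'"
proof -
  have len: "length \<Gamma>' = length \<Gamma>"
    using arg_cong[OF snd_eq, of length] by simp
  have "snd (\<Gamma>' ! i) = snd (\<Gamma> ! i)" if "i < length \<Gamma>" for i
    using arg_cong[OF snd_eq, of "\<lambda>xs. xs ! i"] that len by simp
  with assms(1,3) len show ?thesis
    unfolding wf_circuit_def by (auto simp: nth_mem)
qed

lemma CC_circuit_negate_output:
  assumes "CC_circuit h m n \<Gamma>"
  shows "CC_circuit h m n (negate_output m \<Gamma>)"
proof -
  have wf: "wf_circuit m n \<Gamma>"
    using assms by (simp add: CC_circuit_def)
  then obtain gs g where \<Gamma>: "\<Gamma> = gs @ [g]"
    by (cases \<Gamma> rule: rev_cases) (auto simp: wf_circuit_def)
  then have snd_eq: "map snd (negate_output m \<Gamma>) = map snd \<Gamma>"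
    by simp
  have accepting: "fst g' \<subseteq> {0..<m}" if "g' \<in> set (negate_output m \<Gamma>)" for g'
  proof -
    from that \<Gamma> consider "g' \<in> set \<Gamma>" | "g' = ({0..<m} - fst g, snd g)"
      by auto
    then show ?thesis
      by cases (use wf_circuit_accepting_subset[OF wf] in auto)
  qed
  have "wf_circuit m n (negate_output m \<Gamma>)"
    using accepting by (intro wf_circuit_cong_snd[OF wf snd_eq] ballI)
  moreover have "gate_depths (negate_output m \<Gamma>) = gate_depths \<Gamma>"
    using snd_eq by (rule gate_depths_cong)
  ultimately show ?thesis
    using assms by (simp add: CC_circuit_def circuit_depth_def)
qed

section \<open>Circuits for AND are large\<close>

definition input_weight :: "bool list \<Rightarrow> wire \<Rightarrow> nat" where
  "input_weight x w = (case w of Var k \<Rightarrow> if x ! k then 1 else 0 | _ \<Rightarrow> 0)"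

definition input_residues :: "nat \<Rightarrow> bool list \<Rightarrow> circuit \<Rightarrow> nat list" where
  "input_residues m x \<Gamma> = map (\<lambda>g. (\<Sum>w\<in>#snd g. input_weight x w) mod m) \<Gamma>"

lemma cong_exchange_nat:
  fixes a b c d :: nat
  assumes "a + b = c + d" and "[a = c] (mod m)"
  shows "[b = d] (mod m)"
proof -
  have "[c + b = c + d] (mod m)"
    using cong_add[OF cong_sym[OF assms(2)] cong_refl[of b]] unfolding assms(1) .
  then show ?thesis
    by (simp add: cong_add_lcancel_nat)
qed

lemma wire_sum_exchange:
  "(\<Sum>w\<in>#M. input_weight x w) + wire_sum x' vs M = (\<Sum>w\<in>#M. input_weight x' w) + wire_sum x vs M"
proof (induction M)
  case (add w M)
  then show ?case
    by (cases w) (simp_all add: input_weight_def wire_val_def)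
qed simp

lemma gate_vals_eq_if_input_residues_eq:
  assumes "input_residues m x gs = input_residues m x' gs"
  shows "gate_vals m x gs = gate_vals m x' gs"
  using assms
proof (induction gs rule: rev_induct)
  case (snoc g gs)
  have "[(\<Sum>w\<in>#snd g. input_weight x w) = (\<Sum>w\<in>#snd g. input_weight x' w)] (mod m)"
    using snoc.prems by (simp add: input_residues_def cong_def)
  from cong_exchange_nat[OF wire_sum_exchange this]
  have "wire_sum x vs (snd g) mod m = wire_sum x' vs (snd g) mod m" for vs
    by (simp add: cong_def)
  moreover have "gate_vals m x gs = gate_vals m x' gs"
    using snoc by (simp add: input_residues_def)
  ultimately show ?case
    by (simp add: gate_vals_snoc gate_val_wire_sum)
qed (simp add: gate_vals_def)

lemma input_residues_collision:
  fixes x :: "nat \<Rightarrow> bool list"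
  assumes "m > 0" and "m ^ length \<Gamma> \<le> n"
  shows "\<exists>t1 t2. t1 < t2 \<and> t2 \<le> n \<and> input_residues m (x t1) \<Gamma> = input_residues m (x t2) \<Gamma>"
proof -
  let ?r = "\<lambda>t. input_residues m (x t) \<Gamma>"
  have "?r ` {0..n} \<subseteq> {rs. set rs \<subseteq> {0..<m} \<and> length rs = length \<Gamma>}"
    using assms(1) by (auto simp: input_residues_def)
  from card_mono[OF _ this] have "card (?r ` {0..n}) \<le> m ^ length \<Gamma>"
    by (simp add: finite_lists_length_eq card_lists_length_eq)
  with assms(2) have "\<not> inj_on ?r {0..n}"
    by (intro pigeonhole) simp
  then obtain t t' where "t \<le> n" "t' \<le> n" "t \<noteq> t'" "?r t = ?r t'"
    by (auto simp: inj_on_def)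
  then show ?thesis
  proof (cases "t < t'")
    case False
    with \<open>t \<noteq> t'\<close> have "t' < t"
      by simp
    with \<open>t \<le> n\<close> \<open>?r t = ?r t'\<close> show ?thesis
      by (intro exI[of _ t'] exI[of _ t]) simp
  qed blast
qed

lemma input_residues_exchange:
  assumes wf: "wf_circuit m n \<Gamma>"
    and pointwise: "\<forall>k<n. (if a ! k then 1 else 0) + (if b ! k then 1 else 0) =
      (if c ! k then 1 else 0) + (if d ! k then 1 else (0::nat))"
    and "input_residues m a \<Gamma> = input_residues m c \<Gamma>"
  shows "input_residues m b \<Gamma> = input_residues m d \<Gamma>"
proof -
  have weight: "input_weight a w + input_weight b w = input_weight c w + input_weight d w"
    if "\<And>k. w = Var k \<Longrightarrow> k < n" for w
    using that pointwise by (cases w) (simp_all add: input_weight_def)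
  have sums: "(\<Sum>w\<in>#M. input_weight a w) + (\<Sum>w\<in>#M. input_weight b w) =
      (\<Sum>w\<in>#M. input_weight c w) + (\<Sum>w\<in>#M. input_weight d w)"
    if "\<And>k. Var k \<in># M \<Longrightarrow> k < n" for M
    using that
  proof (induction M)
    case (add w M)
    have "input_weight a w + input_weight b w = input_weight c w + input_weight d w"
      using add.prems by (intro weight) simp
    with add show ?case
      by simp
  qed simp
  have "(\<Sum>w\<in>#snd g. input_weight b w) mod m = (\<Sum>w\<in>#snd g. input_weight d w) mod m"
    if "g \<in> set \<Gamma>" for g
  proof -
    have "[(\<Sum>w\<in>#snd g. input_weight a w) = (\<Sum>w\<in>#snd g. input_weight c w)] (mod m)"
      using assms(3) that by (simp add: input_residues_def cong_def)
    from cong_exchange_nat[OF sums[OF wf_circuit_Var_less[OF wf that]] this] show ?thesis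
      by (simp add: cong_def)
  qed
  then show ?thesis
    by (simp add: input_residues_def)
qed

lemma AND_circuit_size_bound:
  assumes "m > 0" and wf: "wf_circuit m n \<Gamma>" and "computes m n \<Gamma> AND_fun"
  shows "n < m ^ length \<Gamma>"
proof (rule ccontr)
  assume "\<not> n < m ^ length \<Gamma>"
  define z where "z t = replicate t False @ replicate (n - t) True" for t
  obtain t1 t2 where t: "t1 < t2" "t2 \<le> n"
    and "input_residues m (z t1) \<Gamma> = input_residues m (z t2) \<Gamma>"
    using input_residues_collision[OF assms(1), of \<Gamma> n z] \<open>\<not> n < m ^ length \<Gamma>\<close> by auto
  define w where "w = replicate t1 True @ replicate (t2 - t1) False @ replicate (n - t2) True"
  define ones where "ones = replicate n True"
  have "(if z t1 ! k then 1 else 0) + (if w ! k then 1 else 0) =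
      (if z t2 ! k then 1 else 0) + (if ones ! k then 1 else (0::nat))" if "k < n" for k
  proof -
    have "z t ! k = (t \<le> k)" for t
      using that by (simp add: z_def nth_append)
    moreover have "w ! k = (k < t1 \<or> t2 \<le> k)"
      using that t by (simp add: w_def nth_append) linarith
    ultimately show ?thesis
      using t that by (simp add: ones_def)
  qed
  then have "input_residues m w \<Gamma> = input_residues m ones \<Gamma>"
    using input_residues_exchange[OF wf] \<open>input_residues m (z t1) \<Gamma> = _\<close> by blast
  from gate_vals_eq_if_input_residues_eq[OF this]
  have "circuit_eval m \<Gamma> w = circuit_eval m \<Gamma> ones"
    by (simp add: circuit_eval_def)
  moreover have "length w = n" and "length ones = n"
    using t by (simp_all add: w_def ones_def)
  ultimately have "AND_fun w = AND_fun ones"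
    using assms(3) by (simp add: computes_def)
  moreover have "AND_fun ones" and "\<not> AND_fun w"
    using t by (auto simp: AND_fun_def ones_def w_def)
  ultimately show False
    by simp
qed

lemma AND_computable_gamma_le:
  assumes "CC_circuit h m n \<Gamma>" and "computes m n \<Gamma> AND_fun"
  shows "AND_computable h m n \<and> gamma h m n \<le> length \<Gamma>"
  using assms unfolding AND_computable_def gamma_def by (auto intro: Least_le)

lemma le_gamma_inv:
  assumes "m > 0" and "AND_computable h m n" and "gamma h m n \<le> K"
  shows "n \<le> gamma_inv h m K"
  unfolding gamma_inv_def
proof (rule Greatest_le_nat[where b = "m ^ K"])
  show "AND_computable h m n \<and> gamma h m n \<le> K"
    using assms(2,3) ..
next
  fix n'
  assume n': "AND_computable h m n' \<and> gamma h m n' \<le> K"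
  then have "\<exists>k \<Gamma>. CC_circuit h m n' \<Gamma> \<and> computes m n' \<Gamma> AND_fun \<and> length \<Gamma> = k"
    by (auto simp: AND_computable_def)
  then have "\<exists>\<Gamma>. CC_circuit h m n' \<Gamma> \<and> computes m n' \<Gamma> AND_fun \<and> length \<Gamma> = gamma h m n'"
    unfolding gamma_def by (rule LeastI_ex)
  then obtain \<Gamma> where "CC_circuit h m n' \<Gamma>" "computes m n' \<Gamma> AND_fun" "length \<Gamma> = gamma h m n'"
    by blast
  then have "n' < m ^ gamma h m n'"
    using AND_circuit_size_bound[OF assms(1), of n' \<Gamma>] by (simp add: CC_circuit_def)
  also have "\<dots> \<le> m ^ K"
    using assms(1) n' by (simp add: power_increasing)
  finally show "n' \<le> m ^ K"
    by simp
qed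

section \<open>Balance\<close>

lemma AND_computable_of_restriction:
  assumes "m > 0" and cc: "CC_circuit h m (length ls) \<Gamma>"
    and restr: "restricts_to_AND (\<lambda>x. circuit_eval m \<Gamma> x = b) k ls"
  shows "AND_computable h m k \<and> gamma h m k \<le> length \<Gamma>"
proof -
  let ?\<Gamma> = "map (subst_gate m ls) \<Gamma>"
  define \<Gamma>' where "\<Gamma>' = (if b then ?\<Gamma> else negate_output m ?\<Gamma>)"
  have wf: "wf_circuit m (length ls) \<Gamma>" and "\<Gamma> \<noteq> []"
    using cc by (simp_all add: CC_circuit_def wf_circuit_def)
  have "\<forall>l\<in>set ls. lit_vars l \<subseteq> {..<k}"
    using restr by (simp add: restricts_to_AND_def)
  with cc have cc': "CC_circuit h m k \<Gamma>'"
    unfolding \<Gamma>'_def by (simp add: CC_circuit_subst_gate CC_circuit_negate_output)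
  moreover have "length \<Gamma>' = length \<Gamma>"
    using \<open>\<Gamma> \<noteq> []\<close> by (simp add: \<Gamma>'_def length_negate_output)
  moreover have "circuit_eval m \<Gamma>' y = (circuit_eval m \<Gamma> (map (lit_val y) ls) = b)" for y
    using circuit_eval_subst_gate[OF assms(1) wf] circuit_eval_negate_output[OF assms(1)] \<open>\<Gamma> \<noteq> []\<close>
    by (cases b) (simp_all add: \<Gamma>'_def)
  with restr have "computes m k \<Gamma>' AND_fun"
    by (simp add: computes_def restricts_to_AND_def)
  ultimately show ?thesis
    using AND_computable_gamma_le[OF cc'] by simp
qed

lemma card_level_set_ge:
  assumes "m > 0" and "CC_circuit h m n \<Gamma>"
    and nonempty: "{x. length x = n \<and> circuit_eval m \<Gamma> x = b} \<noteq> {}"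
  shows "2 ^ n \<le> card {x. length x = n \<and> circuit_eval m \<Gamma> x = b} * 2 ^ gamma_inv h m (length \<Gamma>)"
proof (rule ccontr)
  let ?N = "gamma_inv h m (length \<Gamma>)"
  assume "\<not> ?thesis"
  then have "card {x. length x = n \<and> circuit_eval m \<Gamma> x = b} * 2 ^ Suc ?N < 2 ^ Suc n"
    by simp
  from restricts_to_AND_of_sparse[OF nonempty this] obtain ls
    where "length ls = n" "restricts_to_AND (\<lambda>x. circuit_eval m \<Gamma> x = b) (Suc ?N) ls"
    by blast
  with assms(1,2) have "AND_computable h m (Suc ?N) \<and> gamma h m (Suc ?N) \<le> length \<Gamma>"
    by (intro AND_computable_of_restriction) simp_all
  with assms(1) have "Suc ?N \<le> ?N"
    by (intro le_gamma_inv) simp_all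
  then show False
    by simp
qed

lemma balance_eq_min:
  "balance n f = 2 * real (min (card {x. length x = n \<and> \<not> f x}) (card {x. length x = n \<and> f x})) / 2 ^ n"
proof -
  define c0 where "c0 = real (card {x. length x = n \<and> \<not> f x})"
  define c1 where "c1 = real (card {x. length x = n \<and> f x})"
  have "{x :: bool list. length x = n} = {x. length x = n \<and> \<not> f x} \<union> {x. length x = n \<and> f x}"
    by auto
  then have "c0 + c1 = 2 ^ n"
    using card_bool_lists[of n] unfolding c0_def c1_def
    by (simp add: card_Un_disjoint finite_bool_lists_filter disjoint_iff flip: of_nat_add)
  then have "balance n f = (c0 + c1 - \<bar>c0 - c1\<bar>) / 2 ^ n"
    by (simp add: balance_def c0_def c1_def diff_divide_distrib)
  also have "c0 + c1 - \<bar>c0 - c1\<bar> = 2 * min c0 c1"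
    by (simp add: abs_if min_def)
  finally show ?thesis
    by (simp add: c0_def c1_def of_nat_min)
qed

theorem corollary6p2:
  fixes h m n :: nat and \<Gamma> :: circuit
  assumes "h > 0" and "m > 0"
    and "CC_circuit h m n \<Gamma>"
    and "nonconstant n (circuit_eval m \<Gamma>)"
  shows "balance n (circuit_eval m \<Gamma>) \<ge> 2 powr (1 - real (gamma_inv h m (length \<Gamma>)))"
proof -
  let ?N = "gamma_inv h m (length \<Gamma>)"
  have level: "(2::real) ^ n \<le> real (card {x. length x = n \<and> circuit_eval m \<Gamma> x = b}) * 2 ^ ?N" for b
  proof -
    obtain x y where "length x = n" "length y = n" "circuit_eval m \<Gamma> x \<noteq> circuit_eval m \<Gamma> y"
      using assms(4) by (auto simp: nonconstant_def)
    then have "{x. length x = n \<and> circuit_eval m \<Gamma> x = b} \<noteq> {}"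
      by blast
    from of_nat_mono[OF card_level_set_ge[OF assms(2,3) this]] show ?thesis
      by simp
  qed
  have "(2::real) ^ n \<le>
      real (min (card {x. length x = n \<and> \<not> circuit_eval m \<Gamma> x})
        (card {x. length x = n \<and> circuit_eval m \<Gamma> x})) * 2 ^ ?N"
    using level[of False] level[of True] by (simp add: min_def)
  then show ?thesis
    by (simp add: balance_eq_min powr_diff powr_realpow field_simps)
qed

end
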